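(* Let $I_5$ be the edgeless graph on $5$ vertices. Then $\lim_{n\to\infty}\sqrt[n]{b_{I_5}(n)}=3^{1/4}$.
   Context: For a graph $G$, $\mathrm{cl}(G)$ denotes its clique complex. For a finite simple graph $H$ and a fixed field $\mathbb{K}$, $b_H(n)=\max_G \sum_{i\ge -1}\dim_{\mathbb{K}}\widetilde H_i(\mathrm{cl}(G);\mathbb{K})$, where $G$ ranges over all simple graphs on at most $n$ vertices containing no induced copy of $H$ (reduced homology, the empty graph contributing $1$). *)

theory Defs
  imports Complex_Main "HOL-Library.Function_Algebras"
begin

definition simple_graph :: "'a set \<Rightarrow> ('a \<Rightarrow> 'a \<Rightarrow> bool) \<Rightarrow> bool" where
  "simple_graph V E \<longleftrightarrow> finite V \<and> (\<forall>x y. E x y \<longrightarrow> x \<in> V \<and> y \<in> V)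
     \<and> (\<forall>x. \<not> E x x) \<and> (\<forall>x y. E x y \<longrightarrow> E y x)"

definition has_induced_copy ::
  "'b set \<Rightarrow> ('b \<Rightarrow> 'b \<Rightarrow> bool) \<Rightarrow> 'a set \<Rightarrow> ('a \<Rightarrow> 'a \<Rightarrow> bool) \<Rightarrow> bool" where
  "has_induced_copy VH EH V E \<longleftrightarrow>
     (\<exists>f. inj_on f VH \<and> f ` VH \<subseteq> V \<and> (\<forall>a\<in>VH. \<forall>b\<in>VH. EH a b \<longleftrightarrow> E (f a) (f b)))"

definition I5_V :: "nat set" where "I5_V = {..<5}"
definition I5_E :: "nat \<Rightarrow> nat \<Rightarrow> bool" where "I5_E = (\<lambda>_ _. False)"

text \<open>Faces of the clique complex with k vertices (dimension k-1); k = 0 gives the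
  empty face, which realises the augmentation (reduced homology).\<close>
definition faces :: "nat set \<Rightarrow> (nat \<Rightarrow> nat \<Rightarrow> bool) \<Rightarrow> nat \<Rightarrow> nat set set" where
  "faces V E k = {S. finite S \<and> S \<subseteq> V \<and> card S = k \<and> (\<forall>x\<in>S. \<forall>y\<in>S. x \<noteq> y \<longrightarrow> E x y)}"

definition chains :: "'k::field itself \<Rightarrow> nat set \<Rightarrow> (nat \<Rightarrow> nat \<Rightarrow> bool) \<Rightarrow> nat \<Rightarrow> (nat set \<Rightarrow> 'k) set" where
  "chains K V E k = {f. \<forall>S. S \<notin> faces V E k \<longrightarrow> f S = 0}"

text \<open>Boundary map from chains on k-vertex faces to chains on (k-1)-vertex faces
  (vertices ordered by the order on nat); for k = 0 it is the zero map.\<close>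
definition boundary :: "nat set \<Rightarrow> (nat \<Rightarrow> nat \<Rightarrow> bool) \<Rightarrow> nat \<Rightarrow> (nat set \<Rightarrow> 'k::field) \<Rightarrow> (nat set \<Rightarrow> 'k)" where
  "boundary V E k f = (\<lambda>T. if k = 0 then 0 else if T \<in> faces V E (k - 1) then
       (\<Sum>v\<in>{v \<in> V - T. insert v T \<in> faces V E k}.
          (-1) ^ card {u\<in>T. u < v} * f (insert v T)) else 0)"

abbreviation fscale :: "'k::field \<Rightarrow> (nat set \<Rightarrow> 'k) \<Rightarrow> (nat set \<Rightarrow> 'k)" where
  "fscale c f \<equiv> (\<lambda>x. c * f x)"

text \<open>Reduced Betti number in dimension k-1: dim ker(boundary_k) - dim im(boundary_(k+1)).\<close>
definition red_betti :: "'k::field itself \<Rightarrow> nat set \<Rightarrow> (nat \<Rightarrow> nat \<Rightarrow> bool) \<Rightarrow> nat \<Rightarrow> nat" where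
  "red_betti K V E k =
     vector_space.dim (fscale :: 'k \<Rightarrow> _) {f \<in> chains K V E k. boundary V E k f = 0}
   - vector_space.dim (fscale :: 'k \<Rightarrow> _) (boundary V E (Suc k) ` chains K V E (Suc k))"

text \<open>Total reduced Betti number (faces have at most card V vertices).\<close>
definition total_red_betti :: "'k::field itself \<Rightarrow> nat set \<Rightarrow> (nat \<Rightarrow> nat \<Rightarrow> bool) \<Rightarrow> nat" where
  "total_red_betti K V E = (\<Sum>k\<le>card V. red_betti K V E k)"

text \<open>b_H(n): graphs on at most n vertices are taken (up to isomorphism) on vertex sets V \<subseteq> {..<n}.\<close>
definition bH :: "'k::field itself \<Rightarrow> 'b set \<Rightarrow> ('b \<Rightarrow> 'b \<Rightarrow> bool) \<Rightarrow> nat \<Rightarrow> nat" where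
  "bH K VH EH n = Max {total_red_betti K V E | V E.
      V \<subseteq> {..<n} \<and> simple_graph V E \<and> \<not> has_induced_copy VH EH V E}"

end

theory Submission
  imports Defs "HOL-Library.FuncSet"
begin

text \<open>Upper bound: the clique complex of \<open>G\<close> is the union of that of \<open>G - v\<close> and the cone over
  the link of \<open>v\<close>, so by Mayer--Vietoris \<open>\<beta>(G) \<le> \<beta>(G - v) + \<beta>(lk v)\<close>, and cones are acyclic.
  Take \<open>v\<close> with the fewest non-neighbours, say \<open>d\<close> of them; deleting them one by one leaves a cone
  on \<open>v\<close>, so \<open>\<beta>(G)\<close> is at most \<open>d\<close> link terms, each on at most \<open>n - 1 - d\<close> vertices. By induction
  \<open>\<beta>(G) \<le> d \<lambda>^(n-1-d) \<le> \<lambda>^n\<close> for \<open>\<lambda> = 3^(1/4)\<close> unless \<open>d = 4\<close>; in that case the four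
  non-neighbours span an edge (else \<open>v\<close> and they form an independent 5-set), which shortens one link
  and gives \<open>3 \<lambda>^(n-5) + \<lambda>^(n-6) \<le> \<lambda>^n\<close>.

  Lower bound: the complete multipartite graph with \<open>m\<close> parts of size 4 has no independent 5-set,
  and its clique complex is the join of \<open>m\<close> four-point spaces, with \<open>3^m\<close> independent top cycles.\<close>

context vector_space begin

lemma independent_card_le_dim_finite_span:
  assumes "B \<subseteq> T" "independent B" "T \<subseteq> span F" "finite F"
  shows "card B \<le> dim T"
proof -
  obtain B' where B': "B \<subseteq> B'" "B' \<subseteq> T" "independent B'" "T \<subseteq> span B'"
    using maximal_independent_subset_extend[of B T] assms by blast
  have "finite B'" using independent_span_bound[OF assms(4) B'(3)] B'(2) assms(3) by blast
  moreover have "card B' = dim T" using basis_card_eq_dim B' by blast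
  ultimately show ?thesis using card_mono[OF _ B'(1)] by simp
qed

lemma dim_subset_finite_span:
  assumes "S \<subseteq> T" "T \<subseteq> span F" "finite F"
  shows "dim S \<le> dim T"
proof -
  obtain B where B: "B \<subseteq> S" "independent B" "S \<subseteq> span B" "card B = dim S"
    by (rule basis_exists)
  have "B \<subseteq> T" using B(1) assms(1) by (rule order_trans)
  from independent_card_le_dim_finite_span[OF this B(2) assms(2,3)] show ?thesis
    unfolding B(4) .
qed

lemma dim_le_dim_kernel_plus_dim_image:
  assumes lin: "module_hom scale scale f" and S: "subspace S" and F: "S \<subseteq> span F" "finite F"
  shows "dim S \<le> dim (S \<inter> {x. f x = 0}) + dim (f ` S)"
proof -
  let ?K = "S \<inter> {x. f x = 0}"
  obtain B0 where B0: "B0 \<subseteq> ?K" "independent B0" "?K \<subseteq> span B0" "card B0 = dim ?K"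
    using basis_exists by blast
  have fB0: "finite B0" using independent_span_bound[OF F(2) B0(2)] B0(1) F(1) by blast
  have span_image: "\<And>A. span (f ` A) = f ` span A"
    using lin by (simp add: module_hom.span_image)
  have fS: "f ` S \<subseteq> span (f ` F)" using F(1) span_image by auto
  obtain D where D: "D \<subseteq> f ` S" "independent D" "f ` S \<subseteq> span D" "card D = dim (f ` S)"
    using basis_exists by blast
  have fD: "finite D" using independent_span_bound[OF _ D(2)] D(1) fS F(2) by blast
  define g where "g d = (SOME c. c \<in> S \<and> f c = d)" for d
  have g: "g d \<in> S \<and> f (g d) = d" if "d \<in> D" for d
    unfolding g_def by (rule someI_ex) (use that D(1) in auto)
  let ?C = "g ` D"
  have fC: "f ` ?C = D" using g by force
  have CS: "span ?C \<subseteq> S" using g S by (intro span_minimal) auto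
  have "S \<subseteq> span (B0 \<union> ?C)"
  proof
    fix x assume x: "x \<in> S"
    have "f x \<in> f ` span ?C" using D(3) x span_image[of ?C] fC by auto
    then obtain y where y: "y \<in> span ?C" "f y = f x" by auto
    have "y \<in> S" using y CS by auto
    have "f (x - y) = 0" using y lin by (simp add: module_hom.diff)
    hence "x - y \<in> ?K" using x \<open>y \<in> S\<close> S by (simp add: subspace_diff)
    hence "x - y \<in> span (B0 \<union> ?C)" using B0(3) span_mono[of B0 "B0 \<union> ?C"] by auto
    moreover have "y \<in> span (B0 \<union> ?C)" using y(1) span_mono[of ?C "B0 \<union> ?C"] by auto
    ultimately have "(x - y) + y \<in> span (B0 \<union> ?C)" by (rule span_add)
    thus "x \<in> span (B0 \<union> ?C)" by simp
  qed
  hence "dim S \<le> card (B0 \<union> ?C)" using fB0 fD by (intro dim_le_card) auto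
  also have "\<dots> \<le> card B0 + card ?C" by (rule card_Un_le)
  also have "\<dots> \<le> card B0 + card D" using card_image_le[OF fD] by simp
  finally show ?thesis using B0(4) D(4) by simp
qed

lemma dim_kernel_plus_dim_image_le_dim:
  assumes lin: "module_hom scale scale f" and F: "S \<subseteq> span F" "finite F"
  shows "dim (S \<inter> {x. f x = 0}) + dim (f ` S) \<le> dim S"
proof -
  let ?K = "S \<inter> {x. f x = 0}"
  obtain B0 where B0: "B0 \<subseteq> ?K" "independent B0" "?K \<subseteq> span B0" "card B0 = dim ?K"
    using basis_exists by blast
  obtain B where B: "B0 \<subseteq> B" "B \<subseteq> S" "independent B" "S \<subseteq> span B"
    using maximal_independent_subset_extend[of B0 S] B0 by blast
  have fB: "finite B" using independent_span_bound[OF F(2) B(3)] B(2) F(1) by blast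
  have dS: "card B = dim S" using basis_card_eq_dim B by blast
  have span_image: "\<And>A. span (f ` A) = f ` span A"
    using lin by (simp add: module_hom.span_image)
  let ?C = "B - B0"
  have "f ` B \<subseteq> insert 0 (f ` ?C)" using B0(1) by auto
  hence "span (f ` B) \<subseteq> span (f ` ?C)"
    using span_mono[of "f ` B" "insert 0 (f ` ?C)"] by simp
  hence "f ` S \<subseteq> span (f ` ?C)" using B(4) span_image[of B] by auto
  hence "dim (f ` S) \<le> card (f ` ?C)" using fB by (intro dim_le_card) auto
  also have "\<dots> \<le> card ?C" using fB by (intro card_image_le) auto
  also have "\<dots> = card B - card B0" using B(1) fB by (simp add: card_Diff_subset finite_subset)
  finally show ?thesis using B0(4) dS card_mono[OF fB B(1)] by simp
qed

end

lemma sum_apply: "(sum g A) x = (\<Sum>a\<in>A. g a x)"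
  by (induction A rule: infinite_finite_induct) auto

interpretation chain_space: vector_space "fscale :: 'k::field \<Rightarrow> (nat set \<Rightarrow> 'k) \<Rightarrow> _"
  by unfold_locales (auto simp: algebra_simps)

definition unit_chain :: "nat set \<Rightarrow> nat set \<Rightarrow> 'k::field" where
  "unit_chain S = (\<lambda>T. if T = S then 1 else 0)"

definition cycles :: "'k::field itself \<Rightarrow> nat set \<Rightarrow> (nat \<Rightarrow> nat \<Rightarrow> bool) \<Rightarrow> nat \<Rightarrow> (nat set \<Rightarrow> 'k) set" where
  "cycles K V E k = {f \<in> chains K V E k. boundary V E k f = 0}"

definition boundaries :: "'k::field itself \<Rightarrow> nat set \<Rightarrow> (nat \<Rightarrow> nat \<Rightarrow> bool) \<Rightarrow> nat \<Rightarrow> (nat set \<Rightarrow> 'k) set" where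
  "boundaries K V E k = boundary V E (Suc k) ` chains K V E (Suc k)"

lemma red_betti_eq: "red_betti K V E k = chain_space.dim (cycles K V E k) - chain_space.dim (boundaries K V E k)"
  unfolding red_betti_def cycles_def boundaries_def by simp

lemma finite_faces: "finite V \<Longrightarrow> finite (faces V E k)"
  by (rule finite_subset[of _ "Pow V"]) (auto simp: faces_def)

lemma faces_0: "faces V E 0 = {{}}"
  by (auto simp: faces_def)

lemma faces_mono: "W \<subseteq> V \<Longrightarrow> faces W E k \<subseteq> faces V E k"
  by (auto simp: faces_def)

lemma chains_mono: "W \<subseteq> V \<Longrightarrow> chains K W E k \<subseteq> chains K V E k"
  using faces_mono[of W V E k] by (auto simp: chains_def)

lemma subspace_chains: "chain_space.subspace (chains K V E k)"
  unfolding chain_space.subspace_def chains_def by auto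

lemma chains_subset_span_unit_chains:
  fixes K :: "'k::field itself"
  assumes "finite V"
  shows "chains K V E k \<subseteq> chain_space.span (unit_chain ` faces V E k)"
proof
  fix f :: "nat set \<Rightarrow> 'k" assume f: "f \<in> chains K V E k"
  have "f = (\<Sum>S\<in>faces V E k. fscale (f S) (unit_chain S))"
  proof
    fix T
    show "f T = (\<Sum>S\<in>faces V E k. fscale (f S) (unit_chain S)) T"
      using f finite_faces[OF assms]
      by (auto simp: sum_apply unit_chain_def chains_def if_distrib sum.delta' cong: if_cong)
  qed
  also have "\<dots> \<in> chain_space.span (unit_chain ` faces V E k)"
    by (intro chain_space.span_sum chain_space.span_scale chain_space.span_base) auto
  finally show "f \<in> chain_space.span (unit_chain ` faces V E k)" .
qed

lemma dim_subset_chains: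
  fixes K :: "'k::field itself"
  assumes "finite V" "S \<subseteq> T" "T \<subseteq> chains K V E k"
  shows "chain_space.dim S \<le> chain_space.dim T"
  using assms(3) chains_subset_span_unit_chains[OF assms(1)]
  by (intro chain_space.dim_subset_finite_span[OF assms(2) _ finite_imageI[OF finite_faces[OF assms(1)]]])
    blast

lemma independent_card_le_dim_chains:
  fixes K :: "'k::field itself"
  assumes "finite V" "B \<subseteq> T" "chain_space.independent B" "T \<subseteq> chains K V E k"
  shows "card B \<le> chain_space.dim T"
  using assms(4) chains_subset_span_unit_chains[OF assms(1)]
  by (intro chain_space.independent_card_le_dim_finite_span[OF assms(2,3) _
        finite_imageI[OF finite_faces[OF assms(1)]]])
    blast

lemma dim_chains_no_faces:
  fixes K :: "'k::field itself"
  assumes "faces V E k = {}" "T \<subseteq> chains K V E k"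
  shows "chain_space.dim T = 0"
proof -
  have "T \<subseteq> chain_space.span {}" using assms by (auto simp: chains_def fun_eq_iff)
  from chain_space.dim_le_card[OF this] show ?thesis by simp
qed

lemma boundary_add: "boundary V E k (f + g) = boundary V E k f + boundary V E k g"
  by (rule ext) (simp add: boundary_def sum.distrib distrib_left)

lemma boundary_scale: "boundary V E k (fscale c f) = fscale c (boundary V E k f)"
  by (rule ext) (simp add: boundary_def sum_distrib_left mult.left_commute)

lemma module_hom_boundary: "module_hom fscale fscale (boundary V E k :: (nat set \<Rightarrow> 'k::field) \<Rightarrow> _)"
  unfolding module_hom_iff using chain_space.module_axioms
  by (simp add: boundary_add boundary_scale)

lemma boundary_uminus: "boundary V E k (- f) = - boundary V E k f"
  using module_hom.neg[OF module_hom_boundary] by blast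

lemma boundary_in_chains: "boundary V E k f \<in> chains K V E (k - 1)"
  by (auto simp: boundary_def chains_def)

lemma cycles_subset_chains: "cycles K V E k \<subseteq> chains K V E k"
  by (auto simp: cycles_def)

lemma boundaries_subset_chains: "boundaries K V E k \<subseteq> chains K V E k"
  using boundary_in_chains[where K=K and V=V and E=E and k="Suc k"] by (auto simp: boundaries_def)

lemma subspace_cycles: "chain_space.subspace (cycles K V E k)"
proof -
  have "cycles K V E k = chains K V E k \<inter> {f. boundary V E k f = 0}" by (auto simp: cycles_def)
  thus ?thesis
    using chain_space.subspace_inter[OF subspace_chains module_hom.subspace_kernel[OF module_hom_boundary]]
    by simp
qed

definition link :: "(nat \<Rightarrow> nat \<Rightarrow> bool) \<Rightarrow> nat set \<Rightarrow> nat \<Rightarrow> nat set" where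
  "link E V v = {w\<in>V. w \<noteq> v \<and> E v w \<and> E w v}"

definition link_proj :: "nat \<Rightarrow> (nat set \<Rightarrow> 'k::field) \<Rightarrow> (nat set \<Rightarrow> 'k)" where
  "link_proj v f = (\<lambda>\<sigma>. if v \<in> \<sigma> then 0 else (-1) ^ card {u\<in>\<sigma>. u < v} * f (insert v \<sigma>))"

lemma finite_link: "finite V \<Longrightarrow> finite (link E V v)"
  by (simp add: link_def)

lemma link_subset_Diff: "link E V v \<subseteq> V - {v}"
  by (auto simp: link_def)

lemma Diff_vertex_in_faces_link:
  assumes "S \<in> faces V E (Suc k)" "v \<in> S"
  shows "S - {v} \<in> faces (link E V v) E k"
  using assms by (auto simp: faces_def link_def)

lemma insert_vertex_in_faces:
  assumes "\<sigma> \<in> faces (link E V v) E k" "v \<in> V"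
  shows "insert v \<sigma> \<in> faces V E (Suc k)" "v \<notin> \<sigma>"
proof -
  show "v \<notin> \<sigma>" using assms by (auto simp: faces_def link_def)
  thus "insert v \<sigma> \<in> faces V E (Suc k)" using assms by (auto simp: faces_def link_def)
qed

lemma link_proj_add: "link_proj v (f + g) = link_proj v f + link_proj v g"
  by (rule ext) (simp add: link_proj_def distrib_left)

lemma link_proj_scale: "link_proj v (fscale c f) = fscale c (link_proj v f)"
  by (rule ext) (simp add: link_proj_def mult.left_commute)

lemma module_hom_link_proj: "module_hom fscale fscale (link_proj v :: (nat set \<Rightarrow> 'k::field) \<Rightarrow> _)"
  unfolding module_hom_iff using chain_space.module_axioms
  by (simp add: link_proj_add link_proj_scale)

lemma link_proj_0 [simp]: "link_proj v 0 = 0"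
  by (rule ext) (simp add: link_proj_def)

lemma link_proj_in_chains:
  assumes f: "f \<in> chains K V E (Suc k)"
  shows "link_proj v f \<in> chains K (link E V v) E k"
  unfolding chains_def
proof (intro CollectI allI impI)
  fix \<sigma> assume \<sigma>: "\<sigma> \<notin> faces (link E V v) E k"
  show "link_proj v f \<sigma> = 0"
  proof (cases "v \<in> \<sigma>")
    case False
    then have "insert v \<sigma> \<notin> faces V E (Suc k)"
      using Diff_vertex_in_faces_link[of "insert v \<sigma>" V E k v] \<sigma> by auto
    thus ?thesis using f False by (simp add: link_proj_def chains_def)
  qed (simp add: link_proj_def)
qed

lemma link_proj_eq_0_iff:
  assumes f: "f \<in> chains K V E k"
  shows "link_proj v f = 0 \<longleftrightarrow> f \<in> chains K (V - {v}) E k"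
proof
  assume 0: "link_proj v f = 0"
  show "f \<in> chains K (V - {v}) E k"
    unfolding chains_def
  proof (intro CollectI allI impI)
    fix S assume S: "S \<notin> faces (V - {v}) E k"
    show "f S = 0"
    proof (cases "S \<in> faces V E k")
      case False thus ?thesis using f by (auto simp: chains_def)
    next
      case True
      hence "v \<in> S" using S by (auto simp: faces_def)
      have "link_proj v f (S - {v}) = 0" using 0 by simp
      thus ?thesis using \<open>v \<in> S\<close> by (simp add: link_proj_def insert_absorb)
    qed
  qed
next
  assume f': "f \<in> chains K (V - {v}) E k"
  show "link_proj v f = 0"
  proof
    fix \<sigma>
    have "insert v \<sigma> \<notin> faces (V - {v}) E k" by (auto simp: faces_def)
    thus "link_proj v f \<sigma> = 0 \<sigma>" using f' by (simp add: link_proj_def chains_def)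
  qed
qed

lemma link_proj_surj:
  assumes g: "g \<in> chains K (link E V v) E k" and v: "v \<in> V"
  shows "\<exists>f\<in>chains K V E (Suc k). link_proj v f = g"
proof -
  define f where "f S = (if v \<in> S then (-1) ^ card {u\<in>S - {v}. u < v} * g (S - {v}) else 0)" for S
  have "f \<in> chains K V E (Suc k)"
    unfolding chains_def
  proof (intro CollectI allI impI)
    fix S assume S: "S \<notin> faces V E (Suc k)"
    show "f S = 0"
    proof (cases "v \<in> S")
      case True
      have "S - {v} \<notin> faces (link E V v) E k"
        using insert_vertex_in_faces(1)[of "S - {v}" E V v k] v S True by (auto simp: insert_absorb)
      thus ?thesis using g True by (simp add: f_def chains_def)
    qed (simp add: f_def)
  qed
  moreover have "link_proj v f = g"
  proof
    fix \<sigma>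
    show "link_proj v f \<sigma> = g \<sigma>"
    proof (cases "v \<in> \<sigma>")
      case True
      have "\<sigma> \<notin> faces (link E V v) E k" using True by (auto simp: faces_def link_def)
      thus ?thesis using True g by (simp add: link_proj_def chains_def)
    next
      case False
      hence "insert v \<sigma> - {v} = \<sigma>" by auto
      thus ?thesis using False by (simp add: link_proj_def f_def mult.assoc[symmetric] flip: power_add)
    qed
  qed
  ultimately show ?thesis by blast
qed

lemma boundary_delete_vertex:
  assumes fin: "finite V" and f: "f \<in> chains K (V - {v}) E k"
  shows "boundary V E k f = boundary (V - {v}) E k f"
proof
  fix T
  let ?A1 = "{w \<in> V - T. insert w T \<in> faces V E k}"
  let ?A2 = "{w \<in> V - {v} - T. insert w T \<in> faces (V - {v}) E k}"
  let ?t = "\<lambda>w. (-1) ^ card {u\<in>T. u < w} * f (insert w T)"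
  have vanish: "?t w = 0" if "insert w T \<notin> faces (V - {v}) E k" for w
    using that f by (simp add: chains_def)
  show "boundary V E k f T = boundary (V - {v}) E k f T"
  proof (cases "k = 0 \<or> T \<notin> faces V E (k - 1)")
    case True
    moreover have "T \<notin> faces (V - {v}) E (k - 1)" if "T \<notin> faces V E (k - 1)"
      using that faces_mono[of "V - {v}" V] by auto
    ultimately show ?thesis by (auto simp: boundary_def)
  next
    case False
    then have k: "k \<noteq> 0" and T: "T \<in> faces V E (k - 1)" by auto
    show ?thesis
    proof (cases "T \<in> faces (V - {v}) E (k - 1)")
      case True
      have "sum ?t ?A1 = sum ?t ?A2"
      proof (rule sum.mono_neutral_right)
        show "finite ?A1" using fin by simp
        show "?A2 \<subseteq> ?A1" by (auto simp: faces_def)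
        have "insert w T \<notin> faces (V - {v}) E k" if "w \<in> ?A1 - ?A2" for w
          using that by (auto simp: faces_def)
        then show "\<forall>w\<in>?A1 - ?A2. ?t w = 0" using vanish by blast
      qed
      thus ?thesis using T True k by (simp add: boundary_def)
    next
      case False
      hence "insert w T \<notin> faces (V - {v}) E k" for w using T by (auto simp: faces_def)
      hence "sum ?t ?A1 = 0" using vanish by (intro sum.neutral) auto
      thus ?thesis using T False k by (simp add: boundary_def)
    qed
  qed
qed

lemma card_less_insert:
  assumes "finite \<sigma>" "w \<notin> \<sigma>"
  shows "card {u\<in>insert w \<sigma>. u < v} = (if w < v then Suc (card {u\<in>\<sigma>. u < v}) else card {u\<in>\<sigma>. u < v})"
proof -
  have "{u\<in>insert w \<sigma>. u < v} = (if w < v then insert w {u\<in>\<sigma>. u < v} else {u\<in>\<sigma>. u < v})"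
    by auto
  thus ?thesis using assms by simp
qed

text \<open>Moving \<open>v\<close> and \<open>w\<close> past each other changes the orientation sign exactly once.\<close>

lemma sign_swap:
  fixes v w :: nat
  assumes "finite \<sigma>" "v \<notin> \<sigma>" "w \<notin> \<sigma>" "v \<noteq> w"
  shows "(-1::'k::field) ^ card {u\<in>\<sigma>. u < v} * (-1) ^ card {u\<in>insert v \<sigma>. u < w}
       = - ((-1) ^ card {u\<in>\<sigma>. u < w} * (-1) ^ card {u\<in>insert w \<sigma>. u < v})"
proof -
  have c1: "card {u\<in>insert v \<sigma>. u < w} = (if v < w then Suc (card {u\<in>\<sigma>. u < w}) else card {u\<in>\<sigma>. u < w})"
    using card_less_insert[OF assms(1,2)] .
  have c2: "card {u\<in>insert w \<sigma>. u < v} = (if w < v then Suc (card {u\<in>\<sigma>. u < v}) else card {u\<in>\<sigma>. u < v})"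
    using card_less_insert[OF assms(1,3)] .
  show ?thesis
    using assms(4) unfolding c1 c2 by (cases "v < w") auto
qed

lemma extensions_through_link:
  assumes "v \<in> V" "v \<notin> \<sigma>"
  shows "{w \<in> V - insert v \<sigma>. insert w (insert v \<sigma>) \<in> faces V E (Suc (Suc j))}
       = {w \<in> link E V v - \<sigma>. insert w \<sigma> \<in> faces (link E V v) E (Suc j)}"
proof (intro set_eqI iffI)
  fix w assume w: "w \<in> {w \<in> V - insert v \<sigma>. insert w (insert v \<sigma>) \<in> faces V E (Suc (Suc j))}"
  then have "insert w (insert v \<sigma>) - {v} \<in> faces (link E V v) E (Suc j)"
    by (intro Diff_vertex_in_faces_link) auto
  moreover have "insert w (insert v \<sigma>) - {v} = insert w \<sigma>" using w assms(2) by auto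
  ultimately show "w \<in> {w \<in> link E V v - \<sigma>. insert w \<sigma> \<in> faces (link E V v) E (Suc j)}"
    using w by (auto simp: faces_def)
next
  fix w assume w: "w \<in> {w \<in> link E V v - \<sigma>. insert w \<sigma> \<in> faces (link E V v) E (Suc j)}"
  have "insert v (insert w \<sigma>) \<in> faces V E (Suc (Suc j))"
    using insert_vertex_in_faces(1)[of "insert w \<sigma>" E V v "Suc j"] w assms(1) by auto
  then show "w \<in> {w \<in> V - insert v \<sigma>. insert w (insert v \<sigma>) \<in> faces V E (Suc (Suc j))}"
    using w by (auto simp: link_def insert_commute)
qed

lemma link_proj_boundary:
  assumes v: "v \<in> V" and f: "f \<in> chains K V E (Suc k)"
  shows "link_proj v (boundary V E (Suc k) f) = - boundary (link E V v) E k (link_proj v f)"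
proof
  fix \<sigma>
  let ?N = "link E V v"
  show "link_proj v (boundary V E (Suc k) f) \<sigma> = (- boundary ?N E k (link_proj v f)) \<sigma>"
  proof (cases "v \<notin> \<sigma> \<and> k \<noteq> 0 \<and> \<sigma> \<in> faces ?N E (k - 1)")
    case False
    moreover have "\<sigma> \<notin> faces ?N E (k - 1)" if "v \<in> \<sigma>" using that by (auto simp: faces_def link_def)
    moreover have "insert v \<sigma> \<notin> faces V E k" if "v \<notin> \<sigma>" "k = 0 \<or> \<sigma> \<notin> faces ?N E (k - 1)"
      using that Diff_vertex_in_faces_link[of "insert v \<sigma>" V E "k - 1" v]
      by (cases k) (auto simp: faces_def)
    ultimately show ?thesis by (auto simp: link_proj_def boundary_def)
  next
    case True
    then obtain j where k: "k = Suc j" and vs: "v \<notin> \<sigma>" and \<sigma>: "\<sigma> \<in> faces ?N E j"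
      by (cases k) auto
    have fins: "finite \<sigma>" using \<sigma> by (simp add: faces_def)
    let ?A = "{w \<in> V - insert v \<sigma>. insert w (insert v \<sigma>) \<in> faces V E (Suc (Suc j))}"
    let ?B = "{w \<in> ?N - \<sigma>. insert w \<sigma> \<in> faces ?N E (Suc j)}"
    have "link_proj v (boundary V E (Suc k) f) \<sigma>
        = (-1) ^ card {u\<in>\<sigma>. u < v} * (\<Sum>w\<in>?A. (-1) ^ card {u \<in> insert v \<sigma>. u < w}
                     * f (insert w (insert v \<sigma>)))"
      using vs insert_vertex_in_faces(1)[OF \<sigma> v] k by (simp add: link_proj_def boundary_def)
    also have "\<dots> = (\<Sum>w\<in>?B. (-1) ^ card {u\<in>\<sigma>. u < v} * ((-1) ^ card {u \<in> insert v \<sigma>. u < w}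
                     * f (insert w (insert v \<sigma>))))"
      unfolding extensions_through_link[OF v vs] by (simp add: sum_distrib_left)
    also have "\<dots> = (\<Sum>w\<in>?B. - ((-1) ^ card {u\<in>\<sigma>. u < w} * link_proj v f (insert w \<sigma>)))"
    proof (rule sum.cong[OF refl])
      fix w assume w: "w \<in> ?B"
      have w\<sigma>: "w \<notin> \<sigma>" and vw: "v \<noteq> w" using w by (auto simp: link_def)
      have "link_proj v f (insert w \<sigma>)
          = (-1) ^ card {u \<in> insert w \<sigma>. u < v} * f (insert w (insert v \<sigma>))"
        using w\<sigma> vw vs by (simp add: link_proj_def insert_commute)
      then show "(-1) ^ card {u\<in>\<sigma>. u < v} * ((-1) ^ card {u \<in> insert v \<sigma>. u < w} * f (insert w (insert v \<sigma>)))
          = - ((-1) ^ card {u\<in>\<sigma>. u < w} * link_proj v f (insert w \<sigma>))"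
        unfolding mult.assoc[symmetric] sign_swap[OF fins vs w\<sigma> vw] by simp
    qed
    also have "\<dots> = - boundary ?N E k (link_proj v f) \<sigma>"
      using k \<sigma> by (simp add: boundary_def sum_negf)
    finally show ?thesis by simp
  qed
qed

lemma dim_cycles_le_delete_link:
  fixes K :: "'k::field itself"
  assumes fin: "finite V" and v: "v \<in> V"
  shows "chain_space.dim (cycles K V E (Suc j))
       \<le> chain_space.dim (cycles K (V - {v}) E (Suc j)) + chain_space.dim (cycles K (link E V v) E j)"
proof -
  let ?Z = "cycles K V E (Suc j)"
  have "chain_space.dim ?Z \<le> chain_space.dim (?Z \<inter> {x. link_proj v x = 0}) + chain_space.dim (link_proj v ` ?Z)"
    using chains_subset_span_unit_chains[OF fin] cycles_subset_chains
    by (intro chain_space.dim_le_dim_kernel_plus_dim_image[OF module_hom_link_proj subspace_cycles _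
          finite_imageI[OF finite_faces[OF fin]]]) blast
  moreover have "?Z \<inter> {x. link_proj v x = 0} \<subseteq> cycles K (V - {v}) E (Suc j)"
  proof
    fix x assume x: "x \<in> ?Z \<inter> {x. link_proj v x = 0}"
    hence xD: "x \<in> chains K (V - {v}) E (Suc j)"
      using link_proj_eq_0_iff[of x K V E "Suc j" v] by (simp add: cycles_def)
    thus "x \<in> cycles K (V - {v}) E (Suc j)"
      using x boundary_delete_vertex[OF fin xD] by (simp add: cycles_def)
  qed
  hence "chain_space.dim (?Z \<inter> {x. link_proj v x = 0}) \<le> chain_space.dim (cycles K (V - {v}) E (Suc j))"
    by (rule dim_subset_chains[OF finite_Diff[OF fin] _ cycles_subset_chains])
  moreover have "link_proj v ` ?Z \<subseteq> cycles K (link E V v) E j"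
  proof
    fix y assume "y \<in> link_proj v ` ?Z"
    then obtain x where x: "x \<in> chains K V E (Suc j)" "boundary V E (Suc j) x = 0" "y = link_proj v x"
      by (auto simp: cycles_def)
    have "boundary (link E V v) E j (link_proj v x) = - link_proj v (boundary V E (Suc j) x)"
      using link_proj_boundary[OF v x(1)] by simp
    thus "y \<in> cycles K (link E V v) E j" using x link_proj_in_chains[OF x(1)] by (simp add: cycles_def)
  qed
  hence "chain_space.dim (link_proj v ` ?Z) \<le> chain_space.dim (cycles K (link E V v) E j)"
    by (rule dim_subset_chains[OF finite_link[OF fin] _ cycles_subset_chains])
  ultimately show ?thesis by linarith
qed

lemma boundaries_link_subset_link_proj:
  assumes v: "v \<in> V"
  shows "boundaries K (link E V v) E j \<subseteq> link_proj v ` boundaries K V E (Suc j)"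
proof
  fix y assume "y \<in> boundaries K (link E V v) E j"
  then obtain g where g: "g \<in> chains K (link E V v) E (Suc j)" "y = boundary (link E V v) E (Suc j) g"
    by (auto simp: boundaries_def)
  have "- g \<in> chains K (link E V v) E (Suc j)" using g(1) by (auto simp: chains_def)
  then obtain f where f: "f \<in> chains K V E (Suc (Suc j))" "link_proj v f = - g"
    using link_proj_surj[OF _ v] by blast
  have "link_proj v (boundary V E (Suc (Suc j)) f) = y"
    using link_proj_boundary[OF v f(1)] f(2) g(2) by (simp add: boundary_uminus)
  moreover have "boundary V E (Suc (Suc j)) f \<in> boundaries K V E (Suc j)"
    using f(1) by (auto simp: boundaries_def)
  ultimately show "y \<in> link_proj v ` boundaries K V E (Suc j)" by blast
qed

lemma dim_boundaries_delete_link_le: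
  fixes K :: "'k::field itself"
  assumes fin: "finite V" and v: "v \<in> V"
  shows "chain_space.dim (boundaries K (V - {v}) E (Suc j)) + chain_space.dim (boundaries K (link E V v) E j)
       \<le> chain_space.dim (boundaries K V E (Suc j))"
proof -
  let ?B = "boundaries K V E (Suc j)"
  have "chain_space.dim (?B \<inter> {x. link_proj v x = 0}) + chain_space.dim (link_proj v ` ?B) \<le> chain_space.dim ?B"
    using chains_subset_span_unit_chains[OF fin] boundaries_subset_chains
    by (intro chain_space.dim_kernel_plus_dim_image_le_dim[OF module_hom_link_proj _
          finite_imageI[OF finite_faces[OF fin]]]) blast
  moreover have "boundaries K (V - {v}) E (Suc j) \<subseteq> ?B \<inter> {x. link_proj v x = 0}"
  proof
    fix y assume "y \<in> boundaries K (V - {v}) E (Suc j)"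
    then obtain x where x: "x \<in> chains K (V - {v}) E (Suc (Suc j))" "y = boundary (V - {v}) E (Suc (Suc j)) x"
      by (auto simp: boundaries_def)
    have "y = boundary V E (Suc (Suc j)) x" using x(2) boundary_delete_vertex[OF fin x(1)] by simp
    moreover have "x \<in> chains K V E (Suc (Suc j))" using chains_mono[of "V - {v}" V] x(1) by blast
    ultimately have "y \<in> ?B" by (simp add: boundaries_def)
    moreover have "y \<in> chains K (V - {v}) E (Suc j)"
      using x(2) boundary_in_chains[of "V - {v}" E "Suc (Suc j)" x K] by simp
    ultimately show "y \<in> ?B \<inter> {x. link_proj v x = 0}"
      using link_proj_eq_0_iff[of y K V E "Suc j" v] boundaries_subset_chains[of K V E "Suc j"] by blast
  qed
  hence "chain_space.dim (boundaries K (V - {v}) E (Suc j)) \<le> chain_space.dim (?B \<inter> {x. link_proj v x = 0})"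
    using boundaries_subset_chains[of K V E "Suc j"] by (intro dim_subset_chains[OF fin]) auto
  moreover have "boundaries K (link E V v) E j \<subseteq> link_proj v ` ?B"
    by (rule boundaries_link_subset_link_proj[OF v])
  hence "chain_space.dim (boundaries K (link E V v) E j) \<le> chain_space.dim (link_proj v ` ?B)"
    using boundaries_subset_chains[of K V E "Suc j"] link_proj_in_chains
    by (intro dim_subset_chains[OF finite_link[OF fin]]) blast+
  ultimately show ?thesis by linarith
qed

lemma red_betti_Suc_le_delete_link:
  fixes K :: "'k::field itself"
  assumes "finite V" "v \<in> V"
  shows "red_betti K V E (Suc j) \<le> red_betti K (V - {v}) E (Suc j) + red_betti K (link E V v) E j"
  using dim_cycles_le_delete_link[OF assms, of K E j] dim_boundaries_delete_link_le[OF assms, of K E j]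
  unfolding red_betti_eq by linarith

lemma red_betti_0_le_delete:
  fixes K :: "'k::field itself"
  assumes fin: "finite V"
  shows "red_betti K V E 0 \<le> red_betti K (V - {v}) E 0"
proof -
  have "chains K V E 0 = chains K (V - {v}) E 0" by (simp add: chains_def faces_0)
  hence "cycles K V E 0 = cycles K (V - {v}) E 0" by (simp add: cycles_def boundary_def)
  moreover have "boundaries K (V - {v}) E 0 \<subseteq> boundaries K V E 0"
  proof
    fix y assume "y \<in> boundaries K (V - {v}) E 0"
    then obtain x where x: "x \<in> chains K (V - {v}) E 1" "y = boundary (V - {v}) E 1 x"
      by (auto simp: boundaries_def)
    have "y = boundary V E 1 x" using x(2) boundary_delete_vertex[OF fin x(1)] by simp
    moreover have "x \<in> chains K V E 1" using chains_mono[of "V - {v}" V] x(1) by blast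
    ultimately show "y \<in> boundaries K V E 0" by (simp add: boundaries_def)
  qed
  hence "chain_space.dim (boundaries K (V - {v}) E 0) \<le> chain_space.dim (boundaries K V E 0)"
    by (rule dim_subset_chains[OF fin _ boundaries_subset_chains])
  ultimately show ?thesis unfolding red_betti_eq by (simp add: diff_le_mono2)
qed

lemma red_betti_eq_0_above_card:
  fixes K :: "'k::field itself"
  assumes fin: "finite V" and k: "card V < k"
  shows "red_betti K V E k = 0"
proof -
  have "faces V E k = {}"
    using card_mono[OF fin] k by (fastforce simp: faces_def)
  hence "chain_space.dim (cycles K V E k) = 0"
    using cycles_subset_chains by (rule dim_chains_no_faces)
  thus ?thesis unfolding red_betti_eq by simp
qed

lemma total_red_betti_eq_sum:
  fixes K :: "'k::field itself"
  assumes fin: "finite V" and M: "card V \<le> M"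
  shows "total_red_betti K V E = (\<Sum>k\<le>M. red_betti K V E k)"
  unfolding total_red_betti_def
proof (rule sum.mono_neutral_left)
  show "\<forall>i\<in>{..M} - {..card V}. red_betti K V E i = 0"
  proof
    fix i assume "i \<in> {..M} - {..card V}"
    then have "card V < i" by simp
    then show "red_betti K V E i = 0" by (rule red_betti_eq_0_above_card[OF fin])
  qed
qed (use M in auto)

theorem total_red_betti_le_delete_link:
  fixes K :: "'k::field itself"
  assumes fin: "finite V" and v: "v \<in> V"
  shows "total_red_betti K V E \<le> total_red_betti K (V - {v}) E + total_red_betti K (link E V v) E"
proof -
  obtain n where n: "card V = Suc n" using v fin by (metis card_Suc_Diff1)
  have cD: "card (V - {v}) = n" using n v fin by simp
  have cN: "card (link E V v) \<le> n"
    using card_mono[OF finite_Diff[OF fin] link_subset_Diff[of E V v]] cD by simp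
  have "total_red_betti K V E = red_betti K V E 0 + (\<Sum>j\<le>n. red_betti K V E (Suc j))"
    unfolding total_red_betti_def n by (rule sum.atMost_Suc_shift)
  also have "\<dots> \<le> red_betti K (V - {v}) E 0
      + (\<Sum>j\<le>n. red_betti K (V - {v}) E (Suc j) + red_betti K (link E V v) E j)"
    using red_betti_0_le_delete[OF fin] red_betti_Suc_le_delete_link[OF fin v]
    by (intro add_mono sum_mono) auto
  also have "\<dots> = (\<Sum>k\<le>Suc n. red_betti K (V - {v}) E k) + (\<Sum>j\<le>n. red_betti K (link E V v) E j)"
    unfolding sum.distrib sum.atMost_Suc_shift[of _ n] by simp
  also have "\<dots> = total_red_betti K (V - {v}) E + total_red_betti K (link E V v) E"
    using total_red_betti_eq_sum[of "V - {v}" "Suc n" K E] total_red_betti_eq_sum[OF finite_link[OF fin] cN, of K E]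
      fin cD by (simp only: finite_Diff le_SucI order_refl)
  finally show ?thesis .
qed

lemma red_betti_singleton_1:
  fixes K :: "'k::field itself"
  shows "red_betti K {v} E 1 = 0"
proof -
  have faces1: "faces {v} E 1 = {{v}}" by (auto simp: faces_def card_Suc_eq)
  have "f = 0" if f: "f \<in> cycles K {v} E 1" for f :: "nat set \<Rightarrow> 'k"
  proof -
    have "{w \<in> {v} - {}. insert w {} \<in> faces {v} E 1} = {v}" using faces1 by auto
    hence "boundary {v} E 1 f {} = f {v}" by (simp add: boundary_def faces_0)
    hence "f {v} = 0" using f by (simp add: cycles_def)
    show "f = 0"
    proof
      fix S show "f S = 0 S"
        using f faces1 \<open>f {v} = 0\<close> by (cases "S = {v}") (auto simp: cycles_def chains_def)
    qed
  qed
  hence "cycles K {v} E 1 \<subseteq> chain_space.span {}" by auto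
  from chain_space.dim_le_card[OF this] show ?thesis unfolding red_betti_eq by simp
qed

lemma red_betti_singleton_0:
  fixes K :: "'k::field itself"
  shows "red_betti K {v} E 0 = 0"
proof -
  let ?e = "unit_chain {} :: nat set \<Rightarrow> 'k"
  have faces1: "faces {v} E 1 = {{v}}" by (auto simp: faces_def card_Suc_eq)
  have "cycles K {v} E 0 \<subseteq> chain_space.span {?e}"
    using cycles_subset_chains[of K "{v}" E 0] chains_subset_span_unit_chains[of "{v}" K E 0]
    by (simp add: faces_0)
  hence "chain_space.dim (cycles K {v} E 0) \<le> 1"
    using chain_space.dim_le_card[of _ "{?e}"] by simp
  moreover have "1 \<le> chain_space.dim (boundaries K {v} E 0)"
  proof -
    have "boundary {v} E 1 (unit_chain {v}) T = ?e T" for T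
    proof (cases "T = {}")
      case True
      have "{w \<in> {v} - T. insert w T \<in> faces {v} E 1} = {v}" using faces1 True by auto
      thus ?thesis using True by (simp add: boundary_def faces_0 unit_chain_def)
    qed (simp add: boundary_def faces_0 unit_chain_def)
    hence "boundary {v} E 1 (unit_chain {v}) = ?e" ..
    moreover have "unit_chain {v} \<in> chains K {v} E 1" using faces1 by (auto simp: chains_def unit_chain_def)
    ultimately have "?e \<in> boundaries K {v} E 0" unfolding boundaries_def by (metis One_nat_def image_eqI)
    moreover have "chain_space.independent {?e}"
      using chain_space.dependent_single by (auto simp: unit_chain_def fun_eq_iff)
    ultimately show ?thesis
      using independent_card_le_dim_chains[of "{v}" "{?e}" "boundaries K {v} E 0" K E 0]
        boundaries_subset_chains[of K "{v}" E 0] by simp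
  qed
  ultimately show ?thesis unfolding red_betti_eq by simp
qed

lemma total_red_betti_singleton: "total_red_betti K {v} E = 0"
  using red_betti_singleton_0[of K v E] red_betti_singleton_1[of K v E]
  by (simp add: total_red_betti_def)

lemma total_red_betti_empty: "total_red_betti K {} E \<le> 1"
proof -
  have "cycles K {} E 0 \<subseteq> chain_space.span (unit_chain ` faces {} E 0)"
    using cycles_subset_chains[of K "{}" E 0] chains_subset_span_unit_chains[of "{}" K E 0] by auto
  from chain_space.dim_le_card[OF this] have "chain_space.dim (cycles K {} E 0) \<le> 1"
    by (simp add: faces_0)
  thus ?thesis by (simp add: total_red_betti_def red_betti_eq)
qed

text \<open>Deleting a vertex other than the apex, or passing to its link, again leaves a cone.\<close>

lemma total_red_betti_cone:
  assumes "finite V" "v \<in> V" "\<forall>w\<in>V. w \<noteq> v \<longrightarrow> E v w \<and> E w v"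
  shows "total_red_betti K V E = 0"
  using assms
proof (induction "card V" arbitrary: V rule: less_induct)
  case less
  show ?case
  proof (cases "V = {v}")
    case True thus ?thesis by (simp add: total_red_betti_singleton)
  next
    case False
    then obtain u where u: "u \<in> V" "u \<noteq> v" using less.prems by blast
    have "total_red_betti K (V - {u}) E = 0"
      using less.prems u card_Diff1_less[OF less.prems(1) u(1)] by (intro less.hyps) auto
    moreover have "total_red_betti K (link E V u) E = 0"
    proof (rule less.hyps)
      show "card (link E V u) < card V"
        using card_mono[OF finite_Diff[OF less.prems(1)] link_subset_Diff[of E V u]]
          card_Diff1_less[OF less.prems(1) u(1)] by simp
      show "finite (link E V u)" using finite_link[OF less.prems(1)] .
      show "v \<in> link E V u" using less.prems(2,3) u by (auto simp: link_def)
      show "\<forall>w\<in>link E V u. w \<noteq> v \<longrightarrow> E v w \<and> E w v" using less.prems(3) by (auto simp: link_def)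
    qed
    ultimately show ?thesis using total_red_betti_le_delete_link[OF less.prems(1) u(1), of K E] by simp
  qed
qed

definition indep_set :: "(nat \<Rightarrow> nat \<Rightarrow> bool) \<Rightarrow> nat set \<Rightarrow> bool" where
  "indep_set E S \<longleftrightarrow> (\<forall>x\<in>S. \<forall>y\<in>S. \<not> E x y)"

definition non_nbrs :: "(nat \<Rightarrow> nat \<Rightarrow> bool) \<Rightarrow> nat set \<Rightarrow> nat \<Rightarrow> nat set" where
  "non_nbrs E V u = {w\<in>V. w \<noteq> u \<and> \<not> E u w}"

lemma has_induced_I5_iff:
  "has_induced_copy I5_V I5_E V E \<longleftrightarrow> (\<exists>S\<subseteq>V. card S = 5 \<and> indep_set E S)"
proof
  assume "has_induced_copy I5_V I5_E V E"
  then obtain f where f: "inj_on f {..<5::nat}" "f ` {..<5} \<subseteq> V" "\<forall>a\<in>{..<5}. \<forall>b\<in>{..<5}. \<not> E (f a) (f b)"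
    by (auto simp: has_induced_copy_def I5_V_def I5_E_def)
  have "card (f ` {..<5}) = 5" using card_image[OF f(1)] by simp
  moreover have "indep_set E (f ` {..<5})" using f(3) by (auto simp: indep_set_def)
  ultimately show "\<exists>S\<subseteq>V. card S = 5 \<and> indep_set E S" using f(2) by blast
next
  assume "\<exists>S\<subseteq>V. card S = 5 \<and> indep_set E S"
  then obtain S where S: "S \<subseteq> V" "card S = 5" "indep_set E S" by blast
  have "finite S" using S(2) by (intro card_ge_0_finite) simp
  then obtain h where "bij_betw h {0..<5::nat} S"
    using ex_bij_betw_nat_finite[of S] S(2) by auto
  then have h: "inj_on h {..<5}" "h ` {..<5} = S" by (auto simp: bij_betw_def atLeast0LessThan)
  have "\<forall>a\<in>{..<5}. \<forall>b\<in>{..<5}. \<not> E (h a) (h b)"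
    using S(3) h(2) by (auto simp: indep_set_def)
  then show "has_induced_copy I5_V I5_E V E"
    unfolding has_induced_copy_def I5_V_def I5_E_def using h S(1) by blast
qed

lemma card_link_non_nbrs:
  assumes fin: "finite V" and sym: "\<forall>x y. E x y \<longrightarrow> E y x" and u: "u \<in> V"
  shows "card (link E V u) + card (non_nbrs E V u) + 1 = card V"
proof -
  have un: "link E V u \<union> non_nbrs E V u = V - {u}" using sym by (auto simp: link_def non_nbrs_def)
  have di: "link E V u \<inter> non_nbrs E V u = {}" by (auto simp: link_def non_nbrs_def)
  have "card (link E V u) + card (non_nbrs E V u) = card (V - {u})"
    unfolding un[symmetric] using fin di
    by (intro card_Un_disjoint[symmetric]) (auto simp: link_def non_nbrs_def)
  also have "\<dots> = card V - 1" using u fin by simp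
  moreover have "0 < card V" using u fin card_gt_0_iff by blast
  ultimately show ?thesis by linarith
qed

lemma total_red_betti_delete_non_nbrs:
  assumes "finite V" "\<forall>x y. E x y \<longrightarrow> E y x" "v \<in> V"
  shows "total_red_betti K (V - non_nbrs E V v) E = 0"
  using assms by (intro total_red_betti_cone[of _ v]) (auto simp: non_nbrs_def)

fun link_sum :: "'k::field itself \<Rightarrow> (nat \<Rightarrow> nat \<Rightarrow> bool) \<Rightarrow> nat set \<Rightarrow> nat list \<Rightarrow> nat" where
  "link_sum K E V [] = 0"
| "link_sum K E V (u # us) = total_red_betti K (link E V u) E + link_sum K E (V - {u}) us"

lemma total_red_betti_le_link_sum:
  assumes "finite V" "set us \<subseteq> V" "distinct us"
  shows "total_red_betti K V E \<le> total_red_betti K (V - set us) E + link_sum K E V us"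
  using assms
proof (induction us arbitrary: V)
  case (Cons u us)
  have u: "u \<in> V" using Cons.prems(2) by simp
  have "total_red_betti K (V - {u}) E \<le> total_red_betti K (V - {u} - set us) E + link_sum K E (V - {u}) us"
    using Cons.prems by (intro Cons.IH) auto
  moreover have "V - {u} - set us = V - set (u # us)" by auto
  ultimately show ?case
    using total_red_betti_le_delete_link[OF Cons.prems(1) u, of K E] by (simp only: link_sum.simps)
qed simp

lemma link_sum_le:
  fixes B :: real
  assumes "\<forall>u\<in>set us. \<forall>W'\<subseteq>V. real (total_red_betti K (link E W' u) E) \<le> B" "W \<subseteq> V"
  shows "real (link_sum K E W us) \<le> real (length us) * B"
  using assms
proof (induction us arbitrary: W)
  case (Cons u us)
  have "real (link_sum K E (W - {u}) us) \<le> real (length us) * B"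
    using Cons.prems(1) Cons.prems(2) by (intro Cons.IH) auto
  moreover have "real (total_red_betti K (link E W u) E) \<le> B" using Cons.prems by simp
  ultimately show ?case by (simp add: algebra_simps)
qed simp

definition lam :: real where "lam = root 4 3"

lemma lam_pos: "0 < lam"
  unfolding lam_def by (rule real_root_gt_zero) auto

lemma lam_pow_4: "lam ^ 4 = 3"
  unfolding lam_def by (rule real_root_pow_pos2) auto

lemma lam_eq_powr: "lam = 3 powr (1/4)"
  unfolding lam_def using root_powr_inverse[of 4 3] by simp

lemma lam_ge: "13/10 \<le> lam"
proof -
  have "(13/10::real) ^ 4 < 3" by (simp add: eval_nat_numeral)
  hence "(13/10::real) ^ 4 < lam ^ 4" by (simp only: lam_pow_4)
  thus ?thesis using power_less_imp_less_base[of "13/10" 4 lam] lam_pos by simp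
qed

lemma lam_ge_1: "1 \<le> lam"
  using lam_ge by simp

lemma pow_4_le_3_pow: "5 \<le> d \<Longrightarrow> (d::nat) ^ 4 \<le> 3 ^ (d + 1)"
proof (induction d rule: nat_induct_at_least)
  case (Suc d)
  have "5 * (d + 1) \<le> 6 * d" using Suc.hyps by simp
  hence "(5 * (d + 1)) ^ 4 \<le> (6 * d) ^ 4" by (rule power_mono) simp
  hence "625 * (d + 1) ^ 4 \<le> 1296 * d ^ 4" by (simp only: power_mult_distrib) simp
  hence "(d + 1) ^ 4 \<le> 3 * d ^ 4" by linarith
  also have "\<dots> \<le> 3 * 3 ^ (d + 1)" using Suc.IH by simp
  finally show ?case by simp
qed simp

text \<open>This is where \<open>3^(1/4)\<close> comes from: \<open>d \<le> lam^(d+1)\<close> fails only at \<open>d = 4\<close>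
  (\<open>4^4 > 3^5\<close>), which needs the separate argument below.\<close>

lemma le_lam_pow_Suc:
  assumes "d \<noteq> 4"
  shows "real d \<le> lam ^ (d + 1)"
proof -
  have "d ^ 4 \<le> 3 ^ (d + 1)"
  proof (cases "d \<le> 3")
    case True
    hence "d = 0 \<or> d = 1 \<or> d = 2 \<or> d = 3" by auto
    thus ?thesis by auto
  qed (use assms pow_4_le_3_pow in simp)
  hence "real d ^ 4 \<le> 3 ^ (d + 1)" by (metis of_nat_le_iff of_nat_numeral of_nat_power)
  also have "\<dots> = (lam ^ 4) ^ (d + 1)" by (simp only: lam_pow_4)
  also have "\<dots> = (lam ^ (d + 1)) ^ 4" by (simp only: power_mult[symmetric] mult.commute)
  finally show ?thesis using power_le_imp_le_base[of "real d" 3 "lam ^ (d+1)"] lam_pos by simp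
qed

lemma lam_pow_recurrence:
  assumes "6 \<le> n"
  shows "3 * lam ^ (n - 5) + lam ^ (n - 6) \<le> lam ^ n"
proof -
  obtain m where n: "n = m + 6" using assms by (metis add.commute le_add_diff_inverse)
  have "3 * lam + 1 \<le> 3 * lam ^ 2"
  proof -
    have "3 * (13/10) * (3/10) \<le> 3 * lam * (lam - 1)"
      using lam_ge by (intro mult_mono) auto
    thus ?thesis by (simp add: power2_eq_square algebra_simps)
  qed
  also have "\<dots> = lam ^ 4 * lam ^ 2" by (simp only: lam_pow_4)
  also have "\<dots> = lam ^ 6" by (simp flip: power_add)
  finally have "lam ^ m * (3 * lam + 1) \<le> lam ^ m * lam ^ 6"
    using lam_pos by (intro mult_left_mono) auto
  thus ?thesis unfolding n by (simp add: power_add algebra_simps)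
qed

lemma edge_in_non_nbrs:
  assumes sym: "\<forall>x y. E x y \<longrightarrow> E y x" and irrefl: "\<forall>x. \<not> E x x"
    and I5_free: "\<not> (\<exists>S\<subseteq>V. card S = 5 \<and> indep_set E S)"
    and v: "v \<in> V" and card4: "card (non_nbrs E V v) = 4"
  shows "\<exists>u1\<in>non_nbrs E V v. \<exists>u2\<in>non_nbrs E V v. u1 \<noteq> u2 \<and> E u1 u2"
proof (rule ccontr)
  let ?N = "non_nbrs E V v"
  assume "\<not> ?thesis"
  then have no_edge: "\<not> E x y" if "x \<in> ?N" "y \<in> ?N" "x \<noteq> y" for x y
    using that by blast
  have "\<not> E x y" if xy: "x \<in> insert v ?N" "y \<in> insert v ?N" for x y
  proof (cases "x = v \<or> y = v")
    case True
    then show ?thesis using xy sym irrefl by (auto simp: non_nbrs_def)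
  next
    case False
    then show ?thesis using xy no_edge irrefl by (cases "x = y") auto
  qed
  then have "indep_set E (insert v ?N)" by (simp add: indep_set_def)
  moreover have "card (insert v ?N) = 5"
  proof -
    have "finite ?N" using card4 by (intro card_ge_0_finite) simp
    moreover have "v \<notin> ?N" by (simp add: non_nbrs_def)
    ultimately show ?thesis using card4 by simp
  qed
  moreover have "insert v ?N \<subseteq> V" using v by (auto simp: non_nbrs_def)
  ultimately show False using I5_free by blast
qed

context
  fixes K :: "'k::field itself" and V :: "nat set" and E :: "nat \<Rightarrow> nat \<Rightarrow> bool" and v :: nat
  assumes fin: "finite V" and sym: "\<forall>x y. E x y \<longrightarrow> E y x"
    and v: "v \<in> V" and v_min: "\<forall>u\<in>V. card (non_nbrs E V v) \<le> card (non_nbrs E V u)"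
    and IH: "\<And>W. W \<subseteq> V \<Longrightarrow> card W < card V \<Longrightarrow> real (total_red_betti K W E) \<le> lam ^ card W"
begin

lemma total_red_betti_le_lam_pow_of_card_le:
  assumes "W \<subseteq> V" "card W \<le> k" "k < card V"
  shows "real (total_red_betti K W E) \<le> lam ^ k"
proof -
  have "real (total_red_betti K W E) \<le> lam ^ card W" using assms by (intro IH) auto
  also have "\<dots> \<le> lam ^ k" by (rule power_increasing[OF assms(2) lam_ge_1])
  finally show ?thesis .
qed

lemma total_red_betti_link_le:
  assumes "u \<in> V" "W \<subseteq> V"
  shows "real (total_red_betti K (link E W u) E) \<le> lam ^ (card V - 1 - card (non_nbrs E V v))"
proof (rule total_red_betti_le_lam_pow_of_card_le)
  have "card (non_nbrs E V v) \<le> card (non_nbrs E V u)" using v_min assms(1) by blast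
  hence "card (link E V u) \<le> card V - 1 - card (non_nbrs E V v)"
    using card_link_non_nbrs[OF fin sym assms(1)] by linarith
  moreover have "link E W u \<subseteq> link E V u" using assms by (auto simp: link_def)
  ultimately show "card (link E W u) \<le> card V - 1 - card (non_nbrs E V v)"
    using card_mono[OF finite_link[OF fin]] by (meson order_trans)
  show "card V - 1 - card (non_nbrs E V v) < card V" using v fin card_gt_0_iff[of V] by auto
  show "link E W u \<subseteq> V" using assms(2) by (auto simp: link_def)
qed

lemma total_red_betti_le_link_sum_non_nbrs:
  assumes "set us = non_nbrs E V v" "distinct us"
  shows "total_red_betti K V E \<le> link_sum K E V us"
  using total_red_betti_le_link_sum[OF fin _ assms(2), of K E] assms(1)
    total_red_betti_delete_non_nbrs[OF fin sym v, of K] by (auto simp: non_nbrs_def)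

lemma total_red_betti_le_lam_pow_step:
  assumes "card (non_nbrs E V v) \<noteq> 4"
  shows "real (total_red_betti K V E) \<le> lam ^ card V"
proof -
  let ?d = "card (non_nbrs E V v)"
  obtain us where us: "set us = non_nbrs E V v" "distinct us"
    using finite_distinct_list[of "non_nbrs E V v"] fin by (auto simp: non_nbrs_def)
  have len: "length us = ?d" using distinct_card[OF us(2)] us(1) by simp
  have "real (total_red_betti K V E) \<le> real (link_sum K E V us)"
    using total_red_betti_le_link_sum_non_nbrs[OF us] by simp
  also have "\<dots> \<le> real (length us) * lam ^ (card V - 1 - ?d)"
    using total_red_betti_link_le us(1) by (intro link_sum_le) (auto simp: non_nbrs_def)
  also have "\<dots> \<le> lam ^ (?d + 1) * lam ^ (card V - 1 - ?d)"
    using le_lam_pow_Suc[OF assms] lam_pos len by (intro mult_right_mono) auto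
  also have "\<dots> = lam ^ card V"
  proof -
    have "?d + 1 + (card V - 1 - ?d) = card V" using card_link_non_nbrs[OF fin sym v] by linarith
    thus ?thesis by (simp only: power_add[symmetric])
  qed
  finally show ?thesis .
qed

text \<open>With exactly four non-neighbours the generic step is too weak; an edge \<open>u1 u2\<close> among them
  makes the link of \<open>u2\<close> in \<open>V - {u1}\<close> one vertex smaller.\<close>

lemma total_red_betti_link_after_nbr_le:
  assumes card4: "card (non_nbrs E V v) = 4" and u: "u1 \<in> V" "u2 \<in> V" "u1 \<noteq> u2" "E u1 u2"
  shows "6 \<le> card V" "real (total_red_betti K (link E (V - {u1}) u2) E) \<le> lam ^ (card V - 6)"
proof -
  have u1N: "u1 \<in> link E V u2" using u sym by (auto simp: link_def)
  have "4 \<le> card (non_nbrs E V u2)" using v_min u(2) card4 by metis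
  hence c2: "card (link E V u2) \<le> card V - 5"
    using card_link_non_nbrs[OF fin sym u(2)] by linarith
  have "1 \<le> card (link E V u2)" using u1N finite_link[OF fin] by (auto simp: Suc_le_eq card_gt_0_iff)
  thus n6: "6 \<le> card V" using c2 by simp
  have "link E (V - {u1}) u2 = link E V u2 - {u1}" by (auto simp: link_def)
  hence "card (link E (V - {u1}) u2) \<le> card V - 6"
    using c2 u1N finite_link[OF fin] by simp
  moreover have "link E (V - {u1}) u2 \<subseteq> V" by (auto simp: link_def)
  ultimately show "real (total_red_betti K (link E (V - {u1}) u2) E) \<le> lam ^ (card V - 6)"
    using n6 by (intro total_red_betti_le_lam_pow_of_card_le) auto
qed

lemma total_red_betti_le_lam_pow_step_4:
  assumes card4: "card (non_nbrs E V v) = 4"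
    and u: "u1 \<in> non_nbrs E V v" "u2 \<in> non_nbrs E V v" "u1 \<noteq> u2" "E u1 u2"
  shows "real (total_red_betti K V E) \<le> lam ^ card V"
proof -
  let ?n = "card V"
  have uV: "u1 \<in> V" "u2 \<in> V" using u by (auto simp: non_nbrs_def)
  obtain rest where r: "set rest = non_nbrs E V v - {u1, u2}" "distinct rest"
    using finite_distinct_list[of "non_nbrs E V v - {u1, u2}"] fin by (auto simp: non_nbrs_def)
  have "card (non_nbrs E V v - {u1, u2}) = 2"
    using u card4 fin by (simp add: card_Diff_subset non_nbrs_def)
  hence len: "length rest = 2" using distinct_card[OF r(2)] r(1) by simp
  have "total_red_betti K V E \<le> link_sum K E V (u1 # u2 # rest)"
    using r u by (intro total_red_betti_le_link_sum_non_nbrs) auto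
  hence "real (total_red_betti K V E) \<le> real (total_red_betti K (link E V u1) E)
      + real (total_red_betti K (link E (V - {u1}) u2) E) + real (link_sum K E (V - {u1} - {u2}) rest)"
    by simp
  moreover have "real (total_red_betti K (link E V u1) E) \<le> lam ^ (?n - 5)"
    using total_red_betti_link_le[OF uV(1) order_refl] card4 by simp
  moreover have "real (link_sum K E (V - {u1} - {u2}) rest) \<le> real (length rest) * lam ^ (?n - 5)"
    using total_red_betti_link_le card4 r(1) by (intro link_sum_le) (auto simp: non_nbrs_def)
  ultimately have "real (total_red_betti K V E) \<le> 3 * lam ^ (?n - 5) + lam ^ (?n - 6)"
    using total_red_betti_link_after_nbr_le(2)[OF card4 uV u(3,4)] len by simp
  also have "\<dots> \<le> lam ^ ?n"
    using lam_pow_recurrence total_red_betti_link_after_nbr_le(1)[OF card4 uV u(3,4)] by blast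
  finally show ?thesis .
qed

end

theorem total_red_betti_le_lam_pow:
  assumes "finite V" "\<forall>x y. E x y \<longrightarrow> E y x" "\<forall>x. \<not> E x x" "\<not> (\<exists>S\<subseteq>V. card S = 5 \<and> indep_set E S)"
  shows "real (total_red_betti K V E) \<le> lam ^ card V"
  using assms
proof (induction "card V" arbitrary: V rule: less_induct)
  case less
  note fin = less.prems(1) and sym = less.prems(2) and irrefl = less.prems(3) and free = less.prems(4)
  show ?case
  proof (cases "V = {}")
    case True
    thus ?thesis using total_red_betti_empty[of K E] by simp
  next
    case False
    obtain v where v: "v \<in> V" and v_min: "\<forall>u\<in>V. card (non_nbrs E V v) \<le> card (non_nbrs E V u)"
      using ex_has_least_nat[of "\<lambda>u. u \<in> V" _ "\<lambda>u. card (non_nbrs E V u)"] False by blast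
    have IH: "real (total_red_betti K W E) \<le> lam ^ card W" if "W \<subseteq> V" "card W < card V" for W
      using less.hyps[OF that(2) finite_subset[OF that(1) fin] sym irrefl] free that(1) by blast
    show ?thesis
    proof (cases "card (non_nbrs E V v) = 4")
      case True
      then obtain u1 u2 where "u1 \<in> non_nbrs E V v" "u2 \<in> non_nbrs E V v" "u1 \<noteq> u2" "E u1 u2"
        using edge_in_non_nbrs[OF sym irrefl free v] by blast
      then show ?thesis
        using total_red_betti_le_lam_pow_step_4[OF fin sym v v_min IH True] by blast
    next
      case False
      then show ?thesis using total_red_betti_le_lam_pow_step[OF fin sym v v_min IH] by blast
    qed
  qed
qed

text \<open>The complete \<open>m\<close>-partite graph whose parts are the blocks \<open>{4i, 4i+1, 4i+2, 4i+3}\<close>.\<close>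

definition multipartite_V :: "nat \<Rightarrow> nat set" where
  "multipartite_V m = {..<4*m}"

definition multipartite_E :: "nat \<Rightarrow> nat \<Rightarrow> nat \<Rightarrow> bool" where
  "multipartite_E m x y \<longleftrightarrow> x < 4*m \<and> y < 4*m \<and> x div 4 \<noteq> y div 4"

lemma faces_multipartite_iff:
  "S \<in> faces (multipartite_V m) (multipartite_E m) k \<longleftrightarrow>
    finite S \<and> S \<subseteq> {..<4*m} \<and> card S = k \<and> inj_on (\<lambda>x. x div 4) S"
  unfolding faces_def multipartite_V_def multipartite_E_def inj_on_def by auto

lemma card_le_of_face_multipartite:
  assumes "S \<in> faces (multipartite_V m) (multipartite_E m) k"
  shows "k \<le> m"
proof -
  have S: "S \<subseteq> {..<4*m}" "card S = k" "inj_on (\<lambda>x. x div 4) S"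
    using assms faces_multipartite_iff by auto
  have "(\<lambda>x. x div 4) ` S \<subseteq> {..<m}" using S(1) by auto
  from card_mono[OF finite_lessThan this] show ?thesis using card_image[OF S(3)] S(2) by simp
qed

lemma simple_graph_multipartite: "simple_graph (multipartite_V m) (multipartite_E m)"
  unfolding simple_graph_def multipartite_V_def multipartite_E_def by auto

lemma no_indep_5_multipartite:
  "\<not> (\<exists>S\<subseteq>multipartite_V m. card S = 5 \<and> indep_set (multipartite_E m) S)"
proof
  assume "\<exists>S\<subseteq>multipartite_V m. card S = 5 \<and> indep_set (multipartite_E m) S"
  then obtain S where S: "S \<subseteq> {..<4*m}" "card S = 5" "indep_set (multipartite_E m) S"
    by (auto simp: multipartite_V_def)
  then obtain x where "x \<in> S" by fastforce
  have "S \<subseteq> {4 * (x div 4)..<4 * (x div 4) + 4}"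
  proof
    fix y assume "y \<in> S"
    hence "y div 4 = x div 4"
      using S \<open>x \<in> S\<close> by (auto simp: indep_set_def multipartite_E_def)
    thus "y \<in> {4 * (x div 4)..<4 * (x div 4) + 4}" by auto
  qed
  from card_mono[OF finite_atLeastLessThan this] show False using S(2) by simp
qed

definition choices :: "nat \<Rightarrow> (nat \<Rightarrow> nat) set" where
  "choices m = PiE {..<m} (\<lambda>_. {1,2,3})"

definition allowed :: "(nat \<Rightarrow> nat) \<Rightarrow> nat \<Rightarrow> bool" where
  "allowed c x \<longleftrightarrow> x mod 4 = 0 \<or> x mod 4 = c (x div 4)"

text \<open>The join of the 0-cycles \<open>[4i] - [4i + c i]\<close>, \<open>i < m\<close>.\<close>

definition join_cycle :: "'k::field itself \<Rightarrow> nat \<Rightarrow> (nat \<Rightarrow> nat) \<Rightarrow> nat set \<Rightarrow> 'k" where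
  "join_cycle K m c S = (if S \<in> faces (multipartite_V m) (multipartite_E m) m \<and> (\<forall>x\<in>S. allowed c x)
      then (-1) ^ card {x\<in>S. x mod 4 \<noteq> 0} else 0)"

definition top_face :: "nat \<Rightarrow> (nat \<Rightarrow> nat) \<Rightarrow> nat set" where
  "top_face m c = (\<lambda>i. 4*i + c i) ` {..<m}"

lemma card_choices: "card (choices m) = 3 ^ m"
  unfolding choices_def by (simp add: card_PiE numeral_3_eq_3)

lemma join_cycle_in_chains: "join_cycle K m c \<in> chains K (multipartite_V m) (multipartite_E m) m"
  by (auto simp: chains_def join_cycle_def)

lemma top_face_in_faces:
  assumes c: "c \<in> choices m"
  shows "top_face m c \<in> faces (multipartite_V m) (multipartite_E m) m" "\<forall>x\<in>top_face m c. allowed c x"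
proof -
  have ci: "c i \<in> {1,2,3}" if "i < m" for i using c that by (auto simp: choices_def)
  have dv: "(4*i + c i) div 4 = i" "(4*i + c i) mod 4 = c i" if "i < m" for i
    using ci[OF that] by auto
  have inj: "inj_on (\<lambda>i. 4*i + c i) {..<m}" by (rule inj_onI) (metis dv(1) lessThan_iff)
  have "inj_on (\<lambda>x. x div 4) (top_face m c)"
  proof (rule inj_onI)
    fix x y assume "x \<in> top_face m c" "y \<in> top_face m c" and xy: "x div 4 = y div 4"
    then obtain i i' where i: "i < m" "x = 4*i + c i" "i' < m" "y = 4*i' + c i'"
      by (auto simp: top_face_def)
    have "i = i'" using xy i dv(1)[of i] dv(1)[of i'] by simp
    thus "x = y" using i by simp
  qed
  moreover have "top_face m c \<subseteq> {..<4*m}"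
  proof
    fix x assume "x \<in> top_face m c"
    then obtain i where i: "i < m" "x = 4*i + c i" by (auto simp: top_face_def)
    have "c i \<le> 3" using ci[OF i(1)] by auto
    thus "x \<in> {..<4*m}" using i by simp
  qed
  moreover have "card (top_face m c) = m" unfolding top_face_def using card_image[OF inj] by simp
  ultimately show "top_face m c \<in> faces (multipartite_V m) (multipartite_E m) m"
    unfolding faces_multipartite_iff by (simp add: top_face_def)
  show "\<forall>x\<in>top_face m c. allowed c x"
    using dv by (auto simp: top_face_def allowed_def)
qed

lemma join_cycle_top_face:
  assumes "c \<in> choices m"
  shows "join_cycle K m c (top_face m c) \<noteq> 0"
  using top_face_in_faces[OF assms] by (simp add: join_cycle_def)

lemma join_cycle_top_face_other:
  assumes c: "c \<in> choices m" and c': "c' \<in> choices m" and ne: "c' \<noteq> c"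
  shows "join_cycle K m c' (top_face m c) = 0"
proof -
  obtain i where i: "i < m" "c i \<noteq> c' i"
    using c c' ne extensionalityI[of c "{..<m}" c'] by (fastforce simp: choices_def PiE_iff)
  have "c i \<in> {1,2,3}" using c i by (auto simp: choices_def)
  hence "\<not> allowed c' (4*i + c i)" using i by (auto simp: allowed_def)
  moreover have "4*i + c i \<in> top_face m c" using i by (auto simp: top_face_def)
  ultimately show ?thesis by (auto simp: join_cycle_def)
qed

lemma faces_multipartite_missing_block:
  assumes T: "T \<in> faces (multipartite_V m) (multipartite_E m) (m - 1)" and m: "m \<noteq> 0"
  obtains j where "j < m" "\<forall>u\<in>T. u div 4 \<noteq> j"
    "\<And>w. w \<notin> T \<Longrightarrow> insert w T \<in> faces (multipartite_V m) (multipartite_E m) m \<longleftrightarrow> w div 4 = j"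
proof -
  have Tp: "finite T" "T \<subseteq> {..<4*m}" "card T = m - 1" "inj_on (\<lambda>x. x div 4) T"
    using T unfolding faces_multipartite_iff by auto
  let ?B = "(\<lambda>x. x div 4) ` T"
  have B: "?B \<subseteq> {..<m}" using Tp(2) by auto
  have "card ({..<m} - ?B) = 1"
    using card_Diff_subset[OF finite_imageI[OF Tp(1)] B] card_image[OF Tp(4)] Tp(3) m by simp
  then obtain j where j: "{..<m} - ?B = {j}" by (rule card_1_singletonE)
  have "insert w T \<in> faces (multipartite_V m) (multipartite_E m) m \<longleftrightarrow> w div 4 = j" if w: "w \<notin> T" for w
  proof -
    have "card (insert w T) = m" using Tp(1,3) w m by simp
    hence "insert w T \<in> faces (multipartite_V m) (multipartite_E m) m \<longleftrightarrow> w < 4*m \<and> w div 4 \<notin> ?B"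
      using Tp w unfolding faces_multipartite_iff by (auto simp: inj_on_insert)
    also have "\<dots> \<longleftrightarrow> w div 4 \<in> {..<m} - ?B" using div_less_iff_less_mult[of 4 w m] by auto
    also have "\<dots> \<longleftrightarrow> w div 4 = j" unfolding j by simp
    finally show ?thesis .
  qed
  moreover have "j < m" "\<forall>u\<in>T. u div 4 \<noteq> j" using j by blast+
  ultimately show ?thesis using that by blast
qed

lemma less_block_offset_iff:
  fixes u j r :: nat
  assumes "u div 4 \<noteq> j" "r < 4"
  shows "u < 4*j + r \<longleftrightarrow> u < 4*j"
proof -
  have "\<not> (4*j \<le> u \<and> u < 4*j + 4)" using assms(1) by auto
  thus ?thesis using assms(2) by auto
qed

text \<open>A codimension-one face \<open>T\<close> misses exactly one block \<open>j\<close>; the only allowed vertices extending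
  it are \<open>4j\<close> and \<open>4j + c j\<close>, whose two terms cancel.\<close>

lemma boundary_join_cycle_at_face:
  assumes c: "c \<in> choices m" and m: "m \<noteq> 0"
    and T: "T \<in> faces (multipartite_V m) (multipartite_E m) (m - 1)" and allowed: "\<forall>x\<in>T. allowed c x"
  shows "boundary (multipartite_V m) (multipartite_E m) m (join_cycle K m c) T = 0"
proof -
  let ?V = "multipartite_V m" and ?E = "multipartite_E m"
  let ?A = "{w \<in> ?V - T. insert w T \<in> faces ?V ?E m}"
  let ?t = "\<lambda>w. (-1) ^ card {u\<in>T. u < w} * join_cycle K m c (insert w T)"
  obtain j where j: "j < m" "\<forall>u\<in>T. u div 4 \<noteq> j"
    and ext: "\<And>w. w \<notin> T \<Longrightarrow> insert w T \<in> faces ?V ?E m \<longleftrightarrow> w div 4 = j"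
    using faces_multipartite_missing_block[OF T m] by blast
  have cj: "c j \<in> {1,2,3}" using c j(1) by (auto simp: choices_def)
  define w1 where "w1 = 4*j"
  define w2 where "w2 = 4*j + c j"
  have w1: "w1 div 4 = j" "w1 mod 4 = 0" and w2: "w2 div 4 = j" "w2 mod 4 = c j" "w1 \<noteq> w2"
    using cj by (auto simp: w1_def w2_def)
  have inA: "w \<in> ?A" "insert w T \<in> faces ?V ?E m" "w \<notin> T" if "w div 4 = j" for w
  proof -
    show "w \<notin> T" using that j(2) by blast
    moreover have "w < 4*m" using that j(1) by linarith
    ultimately show "w \<in> ?A" "insert w T \<in> faces ?V ?E m" using ext that by (auto simp: multipartite_V_def)
  qed
  have "?t w = 0" if "w \<in> ?A - {w1, w2}" for w
  proof -
    have "w div 4 = j" using that ext by blast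
    hence "\<not> allowed c w"
      using that div_mult_mod_eq[of w 4] unfolding allowed_def w1_def w2_def by auto
    thus ?thesis by (simp add: join_cycle_def)
  qed
  hence "sum ?t ?A = ?t w1 + ?t w2"
    using inA w1(1) w2 by (subst sum.mono_neutral_right[of ?A "{w1, w2}"]) (auto simp: multipartite_V_def)
  also have "\<dots> = 0"
  proof -
    have "{u\<in>T. u < w1} = {u\<in>T. u < w2}"
      using j(2) cj less_block_offset_iff[of _ j "c j"] by (auto simp: w1_def w2_def)
    moreover have "{x\<in>insert w1 T. x mod 4 \<noteq> 0} = {x\<in>T. x mod 4 \<noteq> 0}" using w1 by auto
    moreover have "{x\<in>insert w2 T. x mod 4 \<noteq> 0} = insert w2 {x\<in>T. x mod 4 \<noteq> 0}" using w2 cj by auto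
    moreover have "finite T" using T by (simp add: faces_def)
    ultimately show ?thesis
      using inA[OF w1(1)] inA[OF w2(1)] allowed w1 w2 by (simp add: join_cycle_def allowed_def)
  qed
  finally show ?thesis using m T by (simp add: boundary_def)
qed

lemma boundary_join_cycle:
  assumes c: "c \<in> choices m"
  shows "boundary (multipartite_V m) (multipartite_E m) m (join_cycle K m c) = 0"
proof
  fix T
  let ?V = "multipartite_V m" and ?E = "multipartite_E m"
  show "boundary ?V ?E m (join_cycle K m c) T = 0 T"
  proof (cases "m \<noteq> 0 \<and> T \<in> faces ?V ?E (m - 1)")
    case True
    show ?thesis
    proof (cases "\<forall>x\<in>T. allowed c x")
      case False
      hence "join_cycle K m c (insert w T) = 0" for w by (auto simp: join_cycle_def)
      thus ?thesis using True by (simp add: boundary_def)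
    qed (use boundary_join_cycle_at_face[OF c] True in auto)
  qed (auto simp: boundary_def)
qed

lemma inj_on_join_cycle:
  fixes K :: "'k::field itself"
  shows "inj_on (join_cycle K m) (choices m)"
proof (rule inj_onI)
  fix c c' assume c: "c \<in> choices m" and c': "c' \<in> choices m" and eq: "join_cycle K m c = join_cycle K m c'"
  show "c = c'"
    using join_cycle_top_face[OF c, of K] join_cycle_top_face_other[OF c c', of K] eq by metis
qed

text \<open>The cycle indexed by \<open>c\<close> is the only one supported on the face \<open>top_face m c\<close>.\<close>

lemma independent_join_cycles:
  fixes K :: "'k::field itself"
  shows "chain_space.independent (join_cycle K m ` choices m)"
  unfolding chain_space.independent_explicit_module
proof (intro allI impI)
  fix t u z
  assume t: "finite t" "t \<subseteq> join_cycle K m ` choices m" "(\<Sum>v\<in>t. fscale (u v) v) = 0" "z \<in> t"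
  obtain c where c: "c \<in> choices m" "z = join_cycle K m c" using t(2,4) by auto
  have "(\<Sum>w\<in>t - {z}. u w * w (top_face m c)) = 0"
  proof (rule sum.neutral, rule ballI)
    fix w assume w: "w \<in> t - {z}"
    then obtain c' where c': "c' \<in> choices m" "w = join_cycle K m c'" using t(2) by auto
    have "c' \<noteq> c" using w c c' by auto
    thus "u w * w (top_face m c) = 0" using join_cycle_top_face_other[OF c(1) c'(1), of K] c' by simp
  qed
  moreover have "(\<Sum>w\<in>t. u w * w (top_face m c)) = 0"
    using fun_cong[OF t(3), of "top_face m c"] by (simp add: sum_apply)
  ultimately have "u z * z (top_face m c) = 0"
    using sum.remove[OF t(1,4), of "\<lambda>w. u w * w (top_face m c)"] by simp
  thus "u z = 0" using join_cycle_top_face[OF c(1), of K] c(2) by simp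
qed

theorem three_pow_le_total_red_betti_multipartite:
  fixes K :: "'k::field itself"
  shows "3 ^ m \<le> total_red_betti K (multipartite_V m) (multipartite_E m)"
proof -
  let ?V = "multipartite_V m" and ?E = "multipartite_E m"
  have fin: "finite ?V" by (simp add: multipartite_V_def)
  have "join_cycle K m ` choices m \<subseteq> cycles K ?V ?E m"
    using join_cycle_in_chains boundary_join_cycle by (auto simp: cycles_def)
  hence "card (join_cycle K m ` choices m) \<le> chain_space.dim (cycles K ?V ?E m)"
    by (rule independent_card_le_dim_chains[OF fin _ independent_join_cycles cycles_subset_chains])
  hence "3 ^ m \<le> chain_space.dim (cycles K ?V ?E m)"
    using card_image[OF inj_on_join_cycle[of K m]] card_choices by simp
  moreover have "faces ?V ?E (Suc m) = {}"
    using card_le_of_face_multipartite[of _ m "Suc m"] by fastforce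
  hence "chains K ?V ?E (Suc m) = {0}" by (auto simp: chains_def fun_eq_iff)
  hence "boundaries K ?V ?E m \<subseteq> chain_space.span {}"
    by (simp add: boundaries_def module_hom.zero[OF module_hom_boundary])
  hence "chain_space.dim (boundaries K ?V ?E m) = 0"
    using chain_space.dim_le_card[of _ "{}"] by simp
  ultimately have "3 ^ m \<le> red_betti K ?V ?E m" unfolding red_betti_eq by simp
  also have "\<dots> \<le> total_red_betti K ?V ?E"
    unfolding total_red_betti_def by (rule member_le_sum) (simp_all add: multipartite_V_def)
  finally show ?thesis .
qed

lemma root_tendsto_of_pow_bounds:
  fixes a :: "nat \<Rightarrow> real" and c :: real
  assumes c: "0 < c" and bounds: "eventually (\<lambda>n. c ^ (n - k) \<le> a n \<and> a n \<le> c ^ n) sequentially"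
  shows "(\<lambda>n. root n (a n)) \<longlonglongrightarrow> c"
proof (rule tendsto_sandwich)
  have "(\<lambda>n. c / root n (c ^ k)) \<longlonglongrightarrow> c / 1"
    using c by (intro tendsto_divide tendsto_const LIMSEQ_root_const) auto
  then show "(\<lambda>n. c / root n (c ^ k)) \<longlonglongrightarrow> c" by simp
  show "eventually (\<lambda>n. c / root n (c ^ k) \<le> root n (a n)) sequentially"
    using bounds eventually_ge_at_top[of "Suc k"]
  proof eventually_elim
    case (elim n)
    have pos: "0 < root n (c ^ k)" using elim c by simp
    have "c = root n (c ^ (n - k) * c ^ k)"
      using elim c by (simp add: real_root_power_cancel flip: power_add)
    also have "\<dots> = root n (c ^ (n - k)) * root n (c ^ k)" by (rule real_root_mult)
    also have "\<dots> \<le> root n (a n) * root n (c ^ k)"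
      using elim pos by (intro mult_right_mono real_root_le_mono) auto
    finally show ?case using pos by (simp add: pos_divide_le_eq)
  qed
  show "eventually (\<lambda>n. root n (a n) \<le> c) sequentially"
    using bounds eventually_gt_at_top[of 0]
  proof eventually_elim
    case (elim n)
    then have "root n (a n) \<le> root n (c ^ n)" by (intro real_root_le_mono) auto
    also have "\<dots> = c" using elim c by (simp add: real_root_power_cancel)
    finally show ?case .
  qed
qed simp

lemma total_red_betti_I5_free_le:
  assumes "V \<subseteq> {..<n}" "simple_graph V E" "\<not> has_induced_copy I5_V I5_E V E"
  shows "real (total_red_betti K V E) \<le> lam ^ n"
proof -
  have "finite V" using assms(1) finite_subset by blast
  then have "real (total_red_betti K V E) \<le> lam ^ card V"
    using assms(2,3) by (intro total_red_betti_le_lam_pow) (auto simp: simple_graph_def has_induced_I5_iff)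
  also have "\<dots> \<le> lam ^ n"
    using card_mono[OF finite_lessThan assms(1)] lam_ge_1 by (intro power_increasing) auto
  finally show ?thesis .
qed

lemma bH_I5_bounds:
  fixes K :: "'k::field itself"
  shows "3 ^ (n div 4) \<le> bH K I5_V I5_E n" "real (bH K I5_V I5_E n) \<le> lam ^ n"
proof -
  let ?A = "{total_red_betti K V E | V E.
      V \<subseteq> {..<n} \<and> simple_graph V E \<and> \<not> has_induced_copy I5_V I5_E V E}"
  have ub: "real x \<le> lam ^ n" if "x \<in> ?A" for x
    using that total_red_betti_I5_free_le by blast
  have "?A \<subseteq> {..nat \<lceil>lam ^ n\<rceil>}"
  proof
    fix x assume "x \<in> ?A"
    hence "real x \<le> real (nat \<lceil>lam ^ n\<rceil>)" using ub real_nat_ceiling_ge order_trans by blast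
    thus "x \<in> {..nat \<lceil>lam ^ n\<rceil>}" by simp
  qed
  hence fin: "finite ?A" by (rule finite_subset) simp
  have mem: "total_red_betti K (multipartite_V (n div 4)) (multipartite_E (n div 4)) \<in> ?A"
  proof -
    have "multipartite_V (n div 4) \<subseteq> {..<n}" by (auto simp: multipartite_V_def)
    moreover have "\<not> has_induced_copy I5_V I5_E (multipartite_V (n div 4)) (multipartite_E (n div 4))"
      using no_indep_5_multipartite has_induced_I5_iff by blast
    ultimately show ?thesis using simple_graph_multipartite by blast
  qed
  have "total_red_betti K (multipartite_V (n div 4)) (multipartite_E (n div 4)) \<le> bH K I5_V I5_E n"
    unfolding bH_def using fin mem by (rule Max_ge)
  moreover have "bH K I5_V I5_E n \<in> ?A"
    unfolding bH_def using fin mem by (intro Max_in) auto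
  ultimately show "3 ^ (n div 4) \<le> bH K I5_V I5_E n" "real (bH K I5_V I5_E n) \<le> lam ^ n"
    using three_pow_le_total_red_betti_multipartite[where K=K and m="n div 4"] ub by auto
qed

lemma lam_pow_le_three_pow_div_4: "lam ^ (n - 3) \<le> 3 ^ (n div 4)"
proof -
  have "lam ^ (n - 3) \<le> lam ^ (4 * (n div 4))"
    using lam_ge_1 by (intro power_increasing) auto
  also have "\<dots> = 3 ^ (n div 4)" by (simp add: power_mult lam_pow_4)
  finally show ?thesis .
qed

theorem corollary6p2:
  shows "(\<lambda>n. root n (real (bH TYPE('k::field) I5_V I5_E n))) \<longlonglongrightarrow> 3 powr (1/4)"
proof -
  have "\<forall>n. lam ^ (n - 3) \<le> real (bH TYPE('k) I5_V I5_E n) \<and> real (bH TYPE('k) I5_V I5_E n) \<le> lam ^ n"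
    using lam_pow_le_three_pow_div_4 bH_I5_bounds[where K="TYPE('k)"]
    by (metis order_trans of_nat_le_iff of_nat_numeral of_nat_power)
  from always_eventually[OF this] show ?thesis
    unfolding lam_eq_powr[symmetric] by (rule root_tendsto_of_pow_bounds[OF lam_pos])
qed

end
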